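(* Let $\rho$ be a density operator on $H$ and let $f$ be any random variable. Then $$\int f\,d\mu_\rho=\int_0^\infty\mu_\rho\left(\{x: f(x)>\lambda\}\right)d\lambda-\int_0^\infty\mu_\rho\left(\{x: f(x)<-\lambda\}\right)d\lambda.$$
   Context: $(\Omega,\mathcal{A},\nu)$ is a probability space and $H=L_2(\Omega,\mathcal{A},\nu)$ is the complex Hilbert space with inner product $\langle f,g\rangle=\int\bar f g\,d\nu$. A random variable is a real-valued $f\in H$; $\chi_A$ is the characteristic function of $A\in\mathcal{A}$, and $\mu(A)$ is the operator $u\mapsto\left(\int_A u\,d\nu\right)\chi_A$ on $H$. A density operator is a positive trace-class operator of trace $1$; for a density operator $\rho$, $\mu_\rho(A)=\mathrm{tr}[\rho\mu(A)]$. For a random variable $f\ge 0$, its quantization is $(\widehat f u)(y)=\int\min[f(x),f(y)]\,u(x)\,d\nu(x)$; for general $f$, $\widehat f=\widehat{f^+}-\widehat{f^-}$ with $f^+=\max(f,0)$, $f^-=-\min(f,0)$. The $q$-integral is $\int f\,d\mu_\rho=\mathrm{tr}(\rho\widehat f)$. *)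

theory Defs
  imports "HOL-Probability.Probability"
begin

text \<open>The Hilbert space H = L2(Omega, A, nu), represented by (complex-valued)
  measurable square-integrable functions; vectors equal nu-a.e. represent the same
  element of H, and all notions below are invariant under a.e. equality.\<close>

definition L2 :: "'a measure \<Rightarrow> ('a \<Rightarrow> complex) set" where
  "L2 M = {u. u \<in> borel_measurable M \<and> integrable M (\<lambda>x. (cmod (u x))\<^sup>2)}"

definition inner_L2 :: "'a measure \<Rightarrow> ('a \<Rightarrow> complex) \<Rightarrow> ('a \<Rightarrow> complex) \<Rightarrow> complex" where
  "inner_L2 M u v = (LINT x|M. cnj (u x) * v x)"

definition norm_L2 :: "'a measure \<Rightarrow> ('a \<Rightarrow> complex) \<Rightarrow> real" where
  "norm_L2 M u = sqrt (LINT x|M. (cmod (u x))\<^sup>2)"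

definition bounded_op :: "'a measure \<Rightarrow> (('a \<Rightarrow> complex) \<Rightarrow> ('a \<Rightarrow> complex)) \<Rightarrow> bool" where
  "bounded_op M T \<longleftrightarrow>
     (\<forall>u\<in>L2 M. T u \<in> L2 M) \<and>
     (\<forall>u\<in>L2 M. \<forall>v\<in>L2 M. (AE x in M. u x = v x) \<longrightarrow> (AE x in M. T u x = T v x)) \<and>
     (\<forall>u\<in>L2 M. \<forall>v\<in>L2 M. AE x in M. T (\<lambda>y. u y + v y) x = T u x + T v x) \<and>
     (\<forall>u\<in>L2 M. \<forall>c. AE x in M. T (\<lambda>y. c * u y) x = c * T u x) \<and>
     (\<exists>C. \<forall>u\<in>L2 M. norm_L2 M (T u) \<le> C * norm_L2 M u)"

definition positive_op :: "'a measure \<Rightarrow> (('a \<Rightarrow> complex) \<Rightarrow> ('a \<Rightarrow> complex)) \<Rightarrow> bool" where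
  "positive_op M T \<longleftrightarrow> (\<forall>u\<in>L2 M. Im (inner_L2 M u (T u)) = 0 \<and> 0 \<le> Re (inner_L2 M u (T u)))"

definition onb :: "'a measure \<Rightarrow> ('a \<Rightarrow> complex) set \<Rightarrow> bool" where
  "onb M B \<longleftrightarrow> B \<subseteq> L2 M \<and>
     (\<forall>e\<in>B. inner_L2 M e e = 1) \<and>
     (\<forall>e\<in>B. \<forall>e'\<in>B. e \<noteq> e' \<longrightarrow> inner_L2 M e e' = 0) \<and>
     (\<forall>u\<in>L2 M. (\<forall>e\<in>B. inner_L2 M e u = 0) \<longrightarrow> norm_L2 M u = 0)"

text \<open>Trace of an operator, computed in an orthonormal basis (basis independent for
  trace-class operators).\<close>
definition tr :: "'a measure \<Rightarrow> (('a \<Rightarrow> complex) \<Rightarrow> ('a \<Rightarrow> complex)) \<Rightarrow> complex" where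
  "tr M T = infsum (\<lambda>e. inner_L2 M e (T e)) (SOME B. onb M B)"

text \<open>Density operator: positive, trace class (for positive operators: the diagonal sum
  converges in one, equivalently every, orthonormal basis), of trace 1.\<close>
definition density_op :: "'a measure \<Rightarrow> (('a \<Rightarrow> complex) \<Rightarrow> ('a \<Rightarrow> complex)) \<Rightarrow> bool" where
  "density_op M \<rho> \<longleftrightarrow> bounded_op M \<rho> \<and> positive_op M \<rho> \<and>
     (\<forall>B. onb M B \<longrightarrow> ((\<lambda>e. inner_L2 M e (\<rho> e)) has_sum 1) B)"

definition mu_op :: "'a measure \<Rightarrow> 'a set \<Rightarrow> ('a \<Rightarrow> complex) \<Rightarrow> ('a \<Rightarrow> complex)" where
  "mu_op M A u = (\<lambda>y. (LINT x:A|M. u x) * indicator A y)"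

definition mu_rho :: "'a measure \<Rightarrow> (('a \<Rightarrow> complex) \<Rightarrow> ('a \<Rightarrow> complex)) \<Rightarrow> 'a set \<Rightarrow> complex" where
  "mu_rho M \<rho> A = tr M (\<lambda>u. \<rho> (mu_op M A u))"

definition quant_pos :: "'a measure \<Rightarrow> ('a \<Rightarrow> real) \<Rightarrow> ('a \<Rightarrow> complex) \<Rightarrow> ('a \<Rightarrow> complex)" where
  "quant_pos M f u = (\<lambda>y. LINT x|M. complex_of_real (min (f x) (f y)) * u x)"

definition quant :: "'a measure \<Rightarrow> ('a \<Rightarrow> real) \<Rightarrow> ('a \<Rightarrow> complex) \<Rightarrow> ('a \<Rightarrow> complex)" where
  "quant M f u = (\<lambda>y. quant_pos M (\<lambda>x. max (f x) 0) u y - quant_pos M (\<lambda>x. - min (f x) 0) u y)"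

definition q_integral :: "'a measure \<Rightarrow> (('a \<Rightarrow> complex) \<Rightarrow> ('a \<Rightarrow> complex)) \<Rightarrow> ('a \<Rightarrow> real) \<Rightarrow> complex" where
  "q_integral M \<rho> f = tr M (\<lambda>u. \<rho> (quant M f u))"

end

theory Submission
  imports Defs
begin

(*
  Write f = p - n with p = max f 0 and n = -min f 0; by definition the quantization of f
  is quant_pos p - quant_pos n, so it suffices to treat a nonnegative p in L2.  Let
  chi_l be the indicator of the level set {p > l}.  As min (p x) (p y) is the length of
  {l >= 0. l < p x, l < p y}, two applications of Fubini's theorem give
    <w, quant_pos p u> = int_0^oo <chi_l, u> <w, chi_l> dl.
  Since mu_op {p > l} u = <chi_l, u> chi_l and the positive operator rho is symmetric,
  <e, rho (mu_op {p > l} e)> = <chi_l, e> <rho e, chi_l>.  Summing over the orthonormal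
  basis defining the trace and exchanging sum and integral yields
    tr (rho o quant_pos p) = int_0^oo mu_rho{p > l} dl.
  The exchange is justified by Bessel's inequality, which dominates the sum by a multiple
  of nu{p > l} (integrable in l, with integral E p), and by the fact that only countably
  many basis vectors contribute (Bessel at rational levels plus right continuity).
*)

section \<open>The space L2 and its inner product\<close>

lemma borel_measurable_cnj [measurable (raw)]:
  assumes "f \<in> borel_measurable M" shows "(\<lambda>x. cnj (f x)) \<in> borel_measurable M"
  by (rule measurable_compose[OF assms borel_measurable_continuous_onI]) (intro continuous_intros)

lemma L2_measurable: "u \<in> L2 M \<Longrightarrow> u \<in> borel_measurable M"
  by (simp add: L2_def)

lemma L2_square_integrable: "u \<in> L2 M \<Longrightarrow> integrable M (\<lambda>x. (cmod (u x))\<^sup>2)"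
  by (simp add: L2_def)

lemma L2_of_real:
  "h \<in> borel_measurable M \<Longrightarrow> integrable M (\<lambda>x. (h x)\<^sup>2) \<Longrightarrow> (\<lambda>x. complex_of_real (h x)) \<in> L2 M"
  by (simp add: L2_def)

lemma L2_add:
  assumes u: "u \<in> L2 M" and v: "v \<in> L2 M"
  shows "(\<lambda>x. u x + v x) \<in> L2 M"
proof -
  have [measurable]: "u \<in> borel_measurable M" "v \<in> borel_measurable M"
    using u v by (simp_all add: L2_def)
  have "integrable M (\<lambda>x. 2 * (cmod (u x))\<^sup>2 + 2 * (cmod (v x))\<^sup>2)"
    using u v by (intro Bochner_Integration.integrable_add integrable_mult_right L2_square_integrable)
  moreover have "(cmod (u x + v x))\<^sup>2 \<le> 2 * (cmod (u x))\<^sup>2 + 2 * (cmod (v x))\<^sup>2" for x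
  proof -
    have "(cmod (u x + v x))\<^sup>2 \<le> (cmod (u x) + cmod (v x))\<^sup>2"
      by (intro power_mono norm_triangle_ineq) simp
    also have "\<dots> \<le> 2 * (cmod (u x))\<^sup>2 + 2 * (cmod (v x))\<^sup>2"
      using sum_squares_bound[of "cmod (u x)" "cmod (v x)"] by (simp add: power2_sum)
    finally show ?thesis .
  qed
  moreover have "(\<lambda>x. u x + v x) \<in> borel_measurable M" by measurable
  ultimately show ?thesis
    by (auto simp: L2_def intro: Bochner_Integration.integrable_bound)
qed

lemma L2_scale:
  assumes u: "u \<in> L2 M" shows "(\<lambda>x. c * u x) \<in> L2 M"
proof -
  have [measurable]: "u \<in> borel_measurable M" using u by (rule L2_measurable)
  have "integrable M (\<lambda>x. (cmod c)\<^sup>2 * (cmod (u x))\<^sup>2)"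
    using u by (intro integrable_mult_right L2_square_integrable)
  moreover have "(\<lambda>x. c * u x) \<in> borel_measurable M" by measurable
  ultimately show ?thesis by (simp add: L2_def norm_mult power_mult_distrib)
qed

lemma L2_diff: "u \<in> L2 M \<Longrightarrow> v \<in> L2 M \<Longrightarrow> (\<lambda>x. u x - v x) \<in> L2 M"
  using L2_add[of u M "\<lambda>x. (-1) * v x"] L2_scale[of v M "-1"] by simp

lemma L2_sum:
  "finite F \<Longrightarrow> (\<And>i. i \<in> F \<Longrightarrow> f i \<in> L2 M) \<Longrightarrow> (\<lambda>x. \<Sum>i\<in>F. f i x) \<in> L2 M"
  by (induction F rule: finite_induct) (simp_all add: L2_add, simp add: L2_def)

text \<open>The elementary bound \<open>|u v| \<le> |u|\<^sup>2 + |v|\<^sup>2\<close> makes the inner product of two L2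
  functions an ordinary Lebesgue integral.\<close>

lemma L2_product_integrable:
  assumes u: "u \<in> L2 M" and v: "v \<in> L2 M"
  shows "integrable M (\<lambda>x. cmod (u x) * cmod (v x))"
proof (rule Bochner_Integration.integrable_bound)
  show "integrable M (\<lambda>x. (cmod (u x))\<^sup>2 + (cmod (v x))\<^sup>2)"
    using u v by (intro Bochner_Integration.integrable_add L2_square_integrable)
  have [measurable]: "u \<in> borel_measurable M" "v \<in> borel_measurable M"
    using u v by (simp_all add: L2_def)
  show "(\<lambda>x. cmod (u x) * cmod (v x)) \<in> borel_measurable M" by measurable
  show "AE x in M. norm (cmod (u x) * cmod (v x)) \<le> norm ((cmod (u x))\<^sup>2 + (cmod (v x))\<^sup>2)"
  proof (intro AE_I2)
    fix x
    have "2 * cmod (u x) * cmod (v x) \<le> (cmod (u x))\<^sup>2 + (cmod (v x))\<^sup>2"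
      by (rule sum_squares_bound)
    moreover have "0 \<le> cmod (u x) * cmod (v x)" by simp
    ultimately have "cmod (u x) * cmod (v x) \<le> (cmod (u x))\<^sup>2 + (cmod (v x))\<^sup>2" by linarith
    then show "norm (cmod (u x) * cmod (v x)) \<le> norm ((cmod (u x))\<^sup>2 + (cmod (v x))\<^sup>2)"
      by simp
  qed
qed

lemma L2_inner_integrable:
  assumes u: "u \<in> L2 M" and v: "v \<in> L2 M"
  shows "integrable M (\<lambda>x. cnj (u x) * v x)"
proof (rule Bochner_Integration.integrable_bound[OF L2_product_integrable[OF u v]])
  have [measurable]: "u \<in> borel_measurable M" "v \<in> borel_measurable M"
    using u v by (simp_all add: L2_def)
  show "(\<lambda>x. cnj (u x) * v x) \<in> borel_measurable M" by measurable
qed (simp add: norm_mult)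

lemma inner_L2_cnj: "cnj (inner_L2 M u v) = inner_L2 M v u"
  unfolding inner_L2_def Bochner_Integration.integral_cnj[symmetric]
  by (simp add: mult.commute)

lemma inner_L2_scale_right: "inner_L2 M u (\<lambda>x. c * v x) = c * inner_L2 M u v"
  unfolding inner_L2_def by (simp add: mult.left_commute)

lemma inner_L2_scale_left: "inner_L2 M (\<lambda>x. c * u x) v = cnj c * inner_L2 M u v"
  unfolding inner_L2_def by (simp add: mult.assoc)

lemma inner_L2_add_right:
  "u \<in> L2 M \<Longrightarrow> v \<in> L2 M \<Longrightarrow> w \<in> L2 M \<Longrightarrow>
    inner_L2 M u (\<lambda>x. v x + w x) = inner_L2 M u v + inner_L2 M u w"
  unfolding inner_L2_def by (simp add: distrib_left L2_inner_integrable)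

lemma inner_L2_add_left:
  "u \<in> L2 M \<Longrightarrow> v \<in> L2 M \<Longrightarrow> w \<in> L2 M \<Longrightarrow>
    inner_L2 M (\<lambda>x. v x + w x) u = inner_L2 M v u + inner_L2 M w u"
  unfolding inner_L2_def by (simp add: distrib_right L2_inner_integrable)

lemma inner_L2_diff_right:
  "u \<in> L2 M \<Longrightarrow> v \<in> L2 M \<Longrightarrow> w \<in> L2 M \<Longrightarrow>
    inner_L2 M u (\<lambda>x. v x - w x) = inner_L2 M u v - inner_L2 M u w"
  unfolding inner_L2_def by (simp add: right_diff_distrib L2_inner_integrable)

lemma inner_L2_diff_left:
  "u \<in> L2 M \<Longrightarrow> v \<in> L2 M \<Longrightarrow> w \<in> L2 M \<Longrightarrow>
    inner_L2 M (\<lambda>x. v x - w x) u = inner_L2 M v u - inner_L2 M w u"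
  unfolding inner_L2_def by (simp add: left_diff_distrib L2_inner_integrable)

lemma inner_L2_sum_right:
  "finite F \<Longrightarrow> u \<in> L2 M \<Longrightarrow> (\<And>i. i \<in> F \<Longrightarrow> f i \<in> L2 M) \<Longrightarrow>
    inner_L2 M u (\<lambda>x. \<Sum>i\<in>F. f i x) = (\<Sum>i\<in>F. inner_L2 M u (f i))"
  unfolding inner_L2_def by (simp add: sum_distrib_left L2_inner_integrable)

lemma inner_L2_sum_left:
  "finite F \<Longrightarrow> u \<in> L2 M \<Longrightarrow> (\<And>i. i \<in> F \<Longrightarrow> f i \<in> L2 M) \<Longrightarrow>
    inner_L2 M (\<lambda>x. \<Sum>i\<in>F. f i x) u = (\<Sum>i\<in>F. inner_L2 M (f i) u)"
proof -
  assume "finite F" "u \<in> L2 M" "\<And>i. i \<in> F \<Longrightarrow> f i \<in> L2 M"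
  then have "cnj (inner_L2 M u (\<lambda>x. \<Sum>i\<in>F. f i x)) = (\<Sum>i\<in>F. cnj (inner_L2 M u (f i)))"
    by (simp add: inner_L2_sum_right)
  then show ?thesis by (simp add: inner_L2_cnj)
qed

lemma inner_L2_self: "inner_L2 M u u = complex_of_real (LINT x|M. (cmod (u x))\<^sup>2)"
proof -
  have "inner_L2 M u u = (LINT x|M. complex_of_real ((cmod (u x))\<^sup>2))"
    unfolding inner_L2_def
    by (rule Bochner_Integration.integral_cong[OF refl]) (subst complex_norm_square, rule mult.commute)
  then show ?thesis by (simp only: integral_complex_of_real)
qed

lemma norm_L2_square: "(norm_L2 M u)\<^sup>2 = (LINT x|M. (cmod (u x))\<^sup>2)"
proof -
  have "0 \<le> (LINT x|M. (cmod (u x))\<^sup>2)" by (rule integral_nonneg_AE) simp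
  then show ?thesis unfolding norm_L2_def by simp
qed

lemma inner_L2_cong_AE:
  assumes [measurable]: "u \<in> borel_measurable M" "u' \<in> borel_measurable M"
    "v \<in> borel_measurable M" "v' \<in> borel_measurable M"
    and "AE x in M. u x = u' x" "AE x in M. v x = v' x"
  shows "inner_L2 M u v = inner_L2 M u' v'"
  unfolding inner_L2_def
proof (rule integral_cong_AE)
  show "AE x in M. cnj (u x) * v x = cnj (u' x) * v' x"
    using assms(5,6) by eventually_elim simp
qed measurable

context finite_measure
begin

lemma L2_const: "(\<lambda>x. c) \<in> L2 M"
  by (simp add: L2_def)

lemma L2_indicator:
  assumes A: "A \<in> sets M" shows "(\<lambda>x. indicator A x :: complex) \<in> L2 M"
proof -
  have "(\<lambda>x. (cmod (indicator A x :: complex))\<^sup>2) = (\<lambda>x. indicator A x :: real)"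
    by (auto simp: indicator_def)
  moreover have "integrable M (\<lambda>x. indicator A x :: real)"
    using A emeasure_finite[of A] by (intro integrable_real_indicator) (auto simp: less_top[symmetric])
  ultimately show ?thesis
    using A by (simp add: L2_def)
qed

lemma L2_norm_integrable: "u \<in> L2 M \<Longrightarrow> integrable M (\<lambda>x. cmod (u x))"
  using L2_product_integrable[OF L2_const[of 1]] by simp

end

section \<open>Orthonormal systems\<close>

definition orthonormal :: "'a measure \<Rightarrow> ('a \<Rightarrow> complex) set \<Rightarrow> bool" where
  "orthonormal M B \<longleftrightarrow> B \<subseteq> L2 M \<and> (\<forall>e\<in>B. inner_L2 M e e = 1) \<and>
     (\<forall>e\<in>B. \<forall>e'\<in>B. e \<noteq> e' \<longrightarrow> inner_L2 M e e' = 0)"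

lemma onb_iff: "onb M B \<longleftrightarrow> orthonormal M B \<and>
    (\<forall>u\<in>L2 M. (\<forall>e\<in>B. inner_L2 M e u = 0) \<longrightarrow> norm_L2 M u = 0)"
  unfolding onb_def orthonormal_def by (simp only: conj_assoc)

lemma orthonormal_L2: "orthonormal M B \<Longrightarrow> e \<in> B \<Longrightarrow> e \<in> L2 M"
  unfolding orthonormal_def by (elim conjE) (erule subsetD)

lemma orthonormal_inner:
  "orthonormal M B \<Longrightarrow> e \<in> B \<Longrightarrow> e' \<in> B \<Longrightarrow> inner_L2 M e e' = (if e = e' then 1 else 0)"
  unfolding orthonormal_def by (simp only: if_split) fast

lemma orthonormal_subset:
  assumes B: "orthonormal M B" and F: "F \<subseteq> B" shows "orthonormal M F"
proof -
  have "F \<subseteq> L2 M" using F orthonormal_L2[OF B] by blast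
  moreover have "inner_L2 M e e' = (if e = e' then 1 else 0)" if "e \<in> F" "e' \<in> F" for e e'
    using F that by (intro orthonormal_inner[OF B]) auto
  ultimately show ?thesis by (simp add: orthonormal_def)
qed

text \<open>Bessel's inequality for a finite orthonormal family: the Fourier coefficients
  \<open>c e = \<langle>e, u\<rangle>\<close> satisfy \<open>\<Sum>|c e|\<^sup>2 = \<parallel>u\<parallel>\<^sup>2 - \<parallel>u - \<Sum>c e e\<parallel>\<^sup>2\<close>.\<close>

lemma bessel_finite:
  assumes orth: "orthonormal M F" and fin: "finite F" and u: "u \<in> L2 M"
  shows "(\<Sum>e\<in>F. (cmod (inner_L2 M e u))\<^sup>2) \<le> (LINT x|M. (cmod (u x))\<^sup>2)"
proof -
  define c where "c e = inner_L2 M e u" for e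
  define S where "S x = (\<Sum>e\<in>F. c e * e x)" for x
  define N :: real where "N = (\<Sum>e\<in>F. (cmod (c e))\<^sup>2)"
  have F_L2: "(\<lambda>x. c e * e x) \<in> L2 M" if "e \<in> F" for e
    using orthonormal_L2[OF orth that] by (rule L2_scale)
  have S_L2: "S \<in> L2 M"
    unfolding S_def[abs_def] using fin F_L2 by (rule L2_sum)
  have coeff_S: "inner_L2 M e S = c e" if e: "e \<in> F" for e
  proof -
    have "inner_L2 M e S = (\<Sum>e'\<in>F. c e' * inner_L2 M e e')"
      unfolding S_def[abs_def] using fin orthonormal_L2[OF orth e] F_L2
      by (simp add: inner_L2_sum_right inner_L2_scale_right)
    also have "\<dots> = c e"
      using fin e by (simp add: orthonormal_inner[OF orth e] if_distrib cong: if_cong)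
    finally show ?thesis .
  qed
  have S_left: "inner_L2 M S v = (\<Sum>e\<in>F. cnj (c e) * inner_L2 M e v)" if "v \<in> L2 M" for v
    unfolding S_def[abs_def] using fin that F_L2
    by (simp add: inner_L2_sum_left inner_L2_scale_left)
  have norm_sq: "cnj (c e) * c e = complex_of_real ((cmod (c e))\<^sup>2)" for e
    by (simp only: complex_norm_square mult.commute[of "cnj _"])
  have Su: "inner_L2 M S u = complex_of_real N"
    using S_left[OF u] by (simp only: c_def[symmetric] norm_sq N_def of_real_sum)
  have SS: "inner_L2 M S S = complex_of_real N"
    using S_left[OF S_L2] by (simp only: coeff_S norm_sq N_def of_real_sum cong: sum.cong)
  have uS: "inner_L2 M u S = complex_of_real N"
    using Su inner_L2_cnj[of M S u] by simp
  have "inner_L2 M (\<lambda>x. u x - S x) (\<lambda>x. u x - S x)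
      = inner_L2 M u u - inner_L2 M S u - (inner_L2 M u S - inner_L2 M S S)"
    using u S_L2 L2_diff[OF u S_L2] by (simp add: inner_L2_diff_left inner_L2_diff_right)
  also have "\<dots> = complex_of_real ((LINT x|M. (cmod (u x))\<^sup>2) - N)"
    unfolding Su uS SS by (simp add: inner_L2_self N_def)
  finally have "(LINT x|M. (cmod (u x - S x))\<^sup>2) = (LINT x|M. (cmod (u x))\<^sup>2) - N"
    unfolding inner_L2_self of_real_eq_iff .
  moreover have "0 \<le> (LINT x|M. (cmod (u x - S x))\<^sup>2)"
    by (rule integral_nonneg_AE) simp
  ultimately show ?thesis by (simp add: N_def c_def)
qed

lemma bessel_summable:
  assumes orth: "orthonormal M B" and u: "u \<in> L2 M"
  shows "(\<lambda>e. (cmod (inner_L2 M e u))\<^sup>2) summable_on B"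
proof (rule nonneg_bdd_above_summable_on)
  have "(\<Sum>e\<in>F. (cmod (inner_L2 M e u))\<^sup>2) \<le> (LINT x|M. (cmod (u x))\<^sup>2)"
    if "finite F" "F \<subseteq> B" for F
    using bessel_finite[OF orthonormal_subset[OF orth that(2)] that(1) u] .
  then show "bdd_above (sum (\<lambda>e. (cmod (inner_L2 M e u))\<^sup>2) ` {F. F \<subseteq> B \<and> finite F})"
    by (auto simp: bdd_above_def)
qed simp

lemma bessel_countable:
  "orthonormal M B \<Longrightarrow> u \<in> L2 M \<Longrightarrow> countable {e\<in>B. inner_L2 M e u \<noteq> 0}"
  using summable_countable_real[OF bessel_summable] by simp

text \<open>The union of a chain of
  orthonormal sets is orthonormal, and a maximal orthonormal set is complete because a
  nonzero vector orthogonal to it could be normalised and added.\<close>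

lemma orthonormal_chain_Union:
  assumes C: "C \<in> chains {B. orthonormal M B}"
  shows "orthonormal M (\<Union>C)"
proof -
  have orth: "orthonormal M X" if "X \<in> C" for X
    using chainsD2[OF C] that by blast
  have "\<Union>C \<subseteq> L2 M" using orth orthonormal_L2 by blast
  moreover have "inner_L2 M e e' = (if e = e' then 1 else 0)" if e_in: "e \<in> \<Union>C" and e'_in: "e' \<in> \<Union>C" for e e'
  proof -
    obtain X Y where "X \<in> C" "e \<in> X" "Y \<in> C" "e' \<in> Y" using e_in e'_in by blast
    with chainsD[OF C] obtain Z where "Z \<in> C" "e \<in> Z" "e' \<in> Z" by blast
    then show ?thesis using orthonormal_inner[OF orth] by blast
  qed
  ultimately show ?thesis by (simp add: orthonormal_def)
qed

lemma orthonormal_maximal_complete: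
  assumes B: "orthonormal M B" and max: "\<And>B'. orthonormal M B' \<Longrightarrow> B \<subseteq> B' \<Longrightarrow> B' = B"
    and u: "u \<in> L2 M" and perp: "\<And>e. e \<in> B \<Longrightarrow> inner_L2 M e u = 0"
  shows "norm_L2 M u = 0"
proof (rule ccontr)
  assume nz: "norm_L2 M u \<noteq> 0"
  define n where "n = norm_L2 M u"
  define e0 where "e0 x = complex_of_real (1 / n) * u x" for x
  have e0_L2: "e0 \<in> L2 M" unfolding e0_def[abs_def] using u by (rule L2_scale)
  have "inner_L2 M e0 e0 = complex_of_real ((1 / n) * (1 / n) * n\<^sup>2)"
    unfolding e0_def[abs_def] inner_L2_scale_left inner_L2_scale_right inner_L2_self
      n_def norm_L2_square by simp
  then have e0_unit: "inner_L2 M e0 e0 = 1" using nz by (simp add: n_def power2_eq_square)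
  have e0_perp: "inner_L2 M e e0 = 0" "inner_L2 M e0 e = 0" if "e \<in> B" for e
  proof -
    show "inner_L2 M e e0 = 0"
      unfolding e0_def[abs_def] inner_L2_scale_right perp[OF that] by simp
    then show "inner_L2 M e0 e = 0"
      using inner_L2_cnj[of M e e0] by simp
  qed
  have "e0 \<notin> B" using e0_perp e0_unit by force
  moreover have "orthonormal M (insert e0 B)"
    using orthonormal_L2[OF B] orthonormal_inner[OF B] e0_L2 e0_unit e0_perp
    by (auto simp: orthonormal_def)
  ultimately show False using max[of "insert e0 B"] by blast
qed

lemma onb_exists: "\<exists>B. onb M B"
proof -
  obtain B where B: "B \<in> {B. orthonormal M B}"
    and max: "\<And>B'. B' \<in> {B. orthonormal M B} \<Longrightarrow> B \<subseteq> B' \<Longrightarrow> B' = B"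
    using Zorn_Lemma[of "{B. orthonormal M B}"] orthonormal_chain_Union by blast
  then have "onb M B"
    using orthonormal_maximal_complete[of M B] by (simp add: onb_iff)
  then show ?thesis ..
qed

definition some_onb :: "'a measure \<Rightarrow> ('a \<Rightarrow> complex) set" where
  "some_onb M = (SOME B. onb M B)"

lemma orthonormal_some_onb: "orthonormal M (some_onb M)"
proof -
  have "onb M (some_onb M)" unfolding some_onb_def by (rule someI_ex[OF onb_exists])
  then show ?thesis by (simp add: onb_iff)
qed

section \<open>Positive operators are symmetric\<close>

locale positive_operator =
  fixes M :: "'a measure" and \<rho> :: "('a \<Rightarrow> complex) \<Rightarrow> ('a \<Rightarrow> complex)"
  assumes bounded: "bounded_op M \<rho>" and positive: "positive_op M \<rho>"
begin

lemma op_L2: "u \<in> L2 M \<Longrightarrow> \<rho> u \<in> L2 M"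
  using bounded by (simp add: bounded_op_def)

text \<open>Since \<open>\<rho>\<close> acts on representatives and is linear only up to null sets, its
  linearity is recorded in the form in which it is used: inside inner products.\<close>

lemma inner_op_add:
  assumes a: "a \<in> L2 M" and u: "u \<in> L2 M" and v: "v \<in> L2 M"
  shows "inner_L2 M a (\<rho> (\<lambda>y. u y + v y)) = inner_L2 M a (\<rho> u) + inner_L2 M a (\<rho> v)"
proof -
  have "AE x in M. \<rho> (\<lambda>y. u y + v y) x = \<rho> u x + \<rho> v x"
    using bounded u v by (simp add: bounded_op_def)
  then have "inner_L2 M a (\<rho> (\<lambda>y. u y + v y)) = inner_L2 M a (\<lambda>x. \<rho> u x + \<rho> v x)"
    using a u v by (intro inner_L2_cong_AE) (auto intro!: L2_measurable op_L2 L2_add)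
  then show ?thesis
    using a u v by (simp add: inner_L2_add_right op_L2)
qed

lemma inner_op_scale:
  assumes a: "a \<in> L2 M" and u: "u \<in> L2 M"
  shows "inner_L2 M a (\<rho> (\<lambda>y. c * u y)) = c * inner_L2 M a (\<rho> u)"
proof -
  have "AE x in M. \<rho> (\<lambda>y. c * u y) x = c * \<rho> u x"
    using bounded u by (simp add: bounded_op_def)
  then have "inner_L2 M a (\<rho> (\<lambda>y. c * u y)) = inner_L2 M a (\<lambda>x. c * \<rho> u x)"
    using a u by (intro inner_L2_cong_AE) (auto intro!: L2_measurable op_L2 L2_scale)
  then show ?thesis by (simp add: inner_L2_scale_right)
qed

lemma inner_op_diff:
  assumes a: "a \<in> L2 M" and u: "u \<in> L2 M" and v: "v \<in> L2 M"
  shows "inner_L2 M a (\<rho> (\<lambda>y. u y - v y)) = inner_L2 M a (\<rho> u) - inner_L2 M a (\<rho> v)"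
  using inner_op_add[OF a u L2_scale[OF v, of "-1"]] inner_op_scale[OF a v, of "-1"] by simp

lemma quadratic_form_real: "u \<in> L2 M \<Longrightarrow> Im (inner_L2 M u (\<rho> u)) = 0"
  using positive by (simp add: positive_op_def)

text \<open>Polarisation: the quadratic form \<open>\<langle>u, \<rho> u\<rangle>\<close> is real, hence \<open>\<rho>\<close> is symmetric.
  With \<open>s = \<langle>u, \<rho> v\<rangle>\<close> and \<open>t = \<langle>v, \<rho> u\<rangle>\<close>, reality of the forms at \<open>u + v\<close> and
  \<open>u + i v\<close> gives \<open>Im (s + t) = 0\<close> and \<open>Re (s - t) = 0\<close>, i.e. \<open>t = cnj s\<close>.\<close>

lemma quadratic_form_add:
  assumes a: "a \<in> L2 M" and b: "b \<in> L2 M"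
  shows "inner_L2 M (\<lambda>x. a x + b x) (\<rho> (\<lambda>x. a x + b x)) =
    inner_L2 M a (\<rho> a) + inner_L2 M a (\<rho> b) + inner_L2 M b (\<rho> a) + inner_L2 M b (\<rho> b)"
  using a b L2_add[OF a b]
  by (simp add: inner_op_add inner_L2_add_left op_L2)

lemma op_symmetric:
  assumes u: "u \<in> L2 M" and v: "v \<in> L2 M"
  shows "inner_L2 M u (\<rho> v) = inner_L2 M (\<rho> u) v"
proof -
  define s where "s = inner_L2 M u (\<rho> v)"
  define t where "t = inner_L2 M v (\<rho> u)"
  have iv: "(\<lambda>x. \<i> * v x) \<in> L2 M" using v by (rule L2_scale)
  have "Im (s + t) = 0"
    using quadratic_form_real[OF L2_add[OF u v]] quadratic_form_add[OF u v]
      quadratic_form_real[OF u] quadratic_form_real[OF v]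
    by (simp add: s_def t_def)
  moreover have "Re (s - t) = 0"
    using quadratic_form_real[OF L2_add[OF u iv]] quadratic_form_add[OF u iv]
      quadratic_form_real[OF u] quadratic_form_real[OF v]
      inner_op_scale[OF u v, of \<i>] inner_op_scale[OF v v, of \<i>]
    by (simp add: s_def t_def inner_L2_scale_left)
  ultimately have "t = cnj s" by (simp add: complex_eq_iff)
  moreover have "inner_L2 M (\<rho> u) v = cnj t"
    unfolding t_def inner_L2_cnj ..
  ultimately show ?thesis by (simp add: s_def)
qed

lemma op_norm_bound: "\<exists>C. \<forall>u\<in>L2 M. (LINT x|M. (cmod (\<rho> u x))\<^sup>2) \<le> C * (LINT x|M. (cmod (u x))\<^sup>2)"
proof -
  obtain C where C: "\<And>u. u \<in> L2 M \<Longrightarrow> norm_L2 M (\<rho> u) \<le> C * norm_L2 M u"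
    using bounded unfolding bounded_op_def by blast
  have "(norm_L2 M (\<rho> u))\<^sup>2 \<le> C\<^sup>2 * (norm_L2 M u)\<^sup>2" if "u \<in> L2 M" for u
  proof -
    have "0 \<le> norm_L2 M (\<rho> u)" by (simp add: norm_L2_def)
    then have "(norm_L2 M (\<rho> u))\<^sup>2 \<le> (C * norm_L2 M u)\<^sup>2"
      using C[OF that] by (intro power_mono)
    then show ?thesis by (simp add: power_mult_distrib)
  qed
  then show ?thesis by (auto simp: norm_L2_square)
qed

end

lemma density_op_positive_operator: "density_op M \<rho> \<Longrightarrow> positive_operator M \<rho>"
  by (simp add: density_op_def positive_operator_def)

section \<open>Two forms of Fubini's theorem\<close>

lemma (in pair_sigma_finite) Fubini_dominated:
  fixes F :: "'a \<Rightarrow> 'b \<Rightarrow> 'c::{banach, second_countable_topology}"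
  assumes meas: "(\<lambda>(x, y). F x y) \<in> borel_measurable (M1 \<Otimes>\<^sub>M M2)"
    and slices: "\<And>x. x \<in> space M1 \<Longrightarrow> integrable M2 (F x)"
    and H: "integrable M1 H" "\<And>x. x \<in> space M1 \<Longrightarrow> (\<integral>y. norm (F x y) \<partial>M2) \<le> H x"
  shows "integrable M2 (\<lambda>y. \<integral>x. F x y \<partial>M1)"
    and "(\<integral>y. (\<integral>x. F x y \<partial>M1) \<partial>M2) = (\<integral>x. (\<integral>y. F x y \<partial>M2) \<partial>M1)"
proof -
  have "integrable M1 (\<lambda>x. \<integral>y. norm (F x y) \<partial>M2)"
  proof (rule Bochner_Integration.integrable_bound[OF H(1)])
    show "(\<lambda>x. \<integral>y. norm (F x y) \<partial>M2) \<in> borel_measurable M1"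
      using meas by measurable
    show "AE x in M1. norm (\<integral>y. norm (F x y) \<partial>M2) \<le> norm (H x)"
    proof (rule AE_I2)
      fix x assume "x \<in> space M1"
      moreover have "0 \<le> (\<integral>y. norm (F x y) \<partial>M2)" by (rule integral_nonneg_AE) simp
      ultimately show "norm (\<integral>y. norm (F x y) \<partial>M2) \<le> norm (H x)"
        using H(2) by fastforce
    qed
  qed
  then have "integrable (M1 \<Otimes>\<^sub>M M2) (\<lambda>(x, y). F x y)"
    using meas slices by (intro Fubini_integrable) auto
  then show "integrable M2 (\<lambda>y. \<integral>x. F x y \<partial>M1)"
    and "(\<integral>y. (\<integral>x. F x y \<partial>M1) \<partial>M2) = (\<integral>x. (\<integral>y. F x y \<partial>M2) \<partial>M1)"
    by (rule integrable_snd, rule Fubini_integral)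
qed

text \<open>The countable support makes \<open>count_space S \<Otimes> N\<close>
  sigma-finite, so the usual Fubini theorem applies.\<close>

lemma has_sum_integral_interchange:
  fixes \<phi> :: "'b \<Rightarrow> 'c \<Rightarrow> 'd::{banach, second_countable_topology}"
  assumes N: "sigma_finite_measure N"
    and S: "countable S" "S \<subseteq> B"
    and outside: "\<And>e l. e \<in> B - S \<Longrightarrow> \<phi> e l = 0"
    and meas: "\<And>e. e \<in> S \<Longrightarrow> \<phi> e \<in> borel_measurable N"
    and G: "integrable N G"
    and bound: "\<And>l F. finite F \<Longrightarrow> F \<subseteq> B \<Longrightarrow> (\<Sum>e\<in>F. norm (\<phi> e l)) \<le> G l"
  shows "((\<lambda>e. integral\<^sup>L N (\<phi> e)) has_sum (\<integral>l. (\<Sum>\<^sub>\<infinity>e\<in>B. \<phi> e l) \<partial>N)) B"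
proof -
  interpret P: pair_sigma_finite "count_space S" N
    using N S(1) by (simp add: pair_sigma_finite_def sigma_finite_measure_count_space_countable)
  have bound_S: "(\<Sum>e\<in>F. norm (\<phi> e l)) \<le> G l" if "finite F" "F \<subseteq> S" for F l
    using bound that S(2) by blast
  have norm_summable: "(\<lambda>e. norm (\<phi> e l)) summable_on S" for l
    using bound_S by (intro nonneg_bdd_above_summable_on) (auto simp: bdd_above_def)
  then have abs_summable: "Infinite_Set_Sum.abs_summable_on (\<lambda>e. \<phi> e l) S" for l
    by (simp add: abs_summable_equivalent[symmetric])
  have integral_count_space: "(\<integral>e. \<phi> e l \<partial>count_space S) = (\<Sum>\<^sub>\<infinity>e\<in>B. \<phi> e l)" for l
  proof -
    have "(\<integral>e. \<phi> e l \<partial>count_space S) = (\<Sum>\<^sub>\<infinity>e\<in>S. \<phi> e l)"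
      using infsetsum_infsum[OF abs_summable] by (simp add: infsetsum_def)
    also have "\<dots> = (\<Sum>\<^sub>\<infinity>e\<in>B. \<phi> e l)"
      using S(2) outside by (intro infsum_cong_neutral) auto
    finally show ?thesis .
  qed
  have joint_meas: "(\<lambda>(e, l). \<phi> e l) \<in> borel_measurable (count_space S \<Otimes>\<^sub>M N)"
    using S(1) meas by (intro measurable_pair_measure_countable1) simp_all
  have "(\<integral>\<^sup>+ z. norm (case z of (e, l) \<Rightarrow> \<phi> e l) \<partial>(count_space S \<Otimes>\<^sub>M N))
      = (\<integral>\<^sup>+ l. (\<integral>\<^sup>+ e. norm (\<phi> e l) \<partial>count_space S) \<partial>N)"
    using joint_meas by (subst P.nn_integral_snd[symmetric]) simp_all
  also have "\<dots> \<le> (\<integral>\<^sup>+ l. G l \<partial>N)"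
  proof (rule nn_integral_mono)
    fix l
    have "(\<integral>\<^sup>+ e. norm (\<phi> e l) \<partial>count_space S) = ennreal (\<Sum>\<^sub>\<infinity>e\<in>S. norm (\<phi> e l))"
      using abs_summable[of l]
      by (simp add: nn_integral_conv_infsetsum infsetsum_infsum)
    also have "\<dots> \<le> G l"
      by (intro ennreal_leI infsum_le_finite_sums norm_summable bound_S)
    finally show "(\<integral>\<^sup>+ e. norm (\<phi> e l) \<partial>count_space S) \<le> G l" .
  qed
  also have "\<dots> < \<infinity>"
    using G bound[of "{}"] by (simp add: integrable_iff_bounded)
  finally have joint_integrable: "integrable (count_space S \<Otimes>\<^sub>M N) (\<lambda>(e, l). \<phi> e l)"
    using joint_meas by (intro integrableI_bounded) simp_all
  have terms_abs_summable: "Infinite_Set_Sum.abs_summable_on (\<lambda>e. integral\<^sup>L N (\<phi> e)) S"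
    using P.integrable_fst[OF joint_integrable] by (simp add: Infinite_Set_Sum.abs_summable_on_def)
  have "(\<integral>l. (\<Sum>\<^sub>\<infinity>e\<in>B. \<phi> e l) \<partial>N) = (\<integral>e. integral\<^sup>L N (\<phi> e) \<partial>count_space S)"
    using P.Fubini_integral[OF joint_integrable] by (simp add: integral_count_space)
  also have "\<dots> = (\<Sum>\<^sub>\<infinity>e\<in>S. integral\<^sup>L N (\<phi> e))"
    using infsetsum_infsum[OF terms_abs_summable] by (simp add: infsetsum_def)
  finally have "((\<lambda>e. integral\<^sup>L N (\<phi> e)) has_sum (\<integral>l. (\<Sum>\<^sub>\<infinity>e\<in>B. \<phi> e l) \<partial>N)) S"
    using terms_abs_summable abs_summable_equivalent abs_summable_summable has_sum_infsum
    by metis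
  moreover have "integral\<^sup>L N (\<phi> e) = 0" if "e \<in> B - S" for e
  proof -
    have "\<phi> e = (\<lambda>_. 0)" using outside[OF that] by auto
    then show ?thesis by simp
  qed
  ultimately show ?thesis
    using S(2) by (subst (asm) has_sum_cong_neutral[where T = B]) auto
qed

section \<open>Layer-cake representation of the quantization\<close>

lemma integral_indicator_Ico:
  fixes a :: real shows "(LINT l|lborel. indicator {0..<a} l :: real) = max 0 a"
  by (cases "0 \<le> a") auto

lemma integrable_indicator_Ico:
  fixes a :: real shows "integrable lborel (\<lambda>l. indicator {0..<a} l :: real)"
proof (cases "0 \<le> a")
  case True
  have "{0..<a} \<in> sets lborel" by simp
  moreover have "emeasure lborel {0..<a} < \<top>" using True by simp
  ultimately show ?thesis by (intro integrable_real_indicator) (auto simp: less_top[symmetric])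
qed simp

text \<open>Throughout, \<open>p\<close> is a nonnegative random variable in L2 (later the positive and
  the negative part of \<open>f\<close>).\<close>

locale nonneg_L2_variable = finite_measure M for M :: "'a measure" +
  fixes p :: "'a \<Rightarrow> real"
  assumes p_measurable [measurable]: "p \<in> borel_measurable M"
    and p_nonneg: "\<And>x. 0 \<le> p x"
    and p_square_integrable: "integrable M (\<lambda>x. (p x)\<^sup>2)"
begin

definition level :: "real \<Rightarrow> 'a set" where
  "level l = {x \<in> space M. l < p x}"

definition level_coeff :: "('a \<Rightarrow> complex) \<Rightarrow> real \<Rightarrow> complex" where
  "level_coeff u l = (LINT x|M. of_bool (l < p x) * u x)"

lemma level_sets [measurable]: "level l \<in> sets M"
  unfolding level_def by measurable

lemma level_L2: "(\<lambda>x. indicator (level l) x :: complex) \<in> L2 M"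
  by (rule L2_indicator[OF level_sets])

lemma level_coeff_inner: "level_coeff u l = inner_L2 M (\<lambda>x. indicator (level l) x) u"
  unfolding level_coeff_def inner_L2_def
  by (rule Bochner_Integration.integral_cong) (auto simp: level_def indicator_def)

lemma level_norm_square: "(LINT x|M. (cmod (indicator (level l) x :: complex))\<^sup>2) = measure M (level l)"
proof -
  have "(\<lambda>x. (cmod (indicator (level l) x :: complex))\<^sup>2) = (\<lambda>x. indicator (level l) x :: real)"
    by (auto simp: indicator_def)
  then show ?thesis by simp
qed

lemma mu_op_level: "mu_op M (level l) u = (\<lambda>y. level_coeff u l * indicator (level l) y)"
proof -
  have "(LINT x:level l|M. u x) = level_coeff u l"
    unfolding set_lebesgue_integral_def level_coeff_def
    by (rule Bochner_Integration.integral_cong) (auto simp: level_def indicator_def)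
  then show ?thesis by (simp add: mu_op_def)
qed

lemma level_coeff_measurable [measurable]:
  assumes [measurable]: "u \<in> borel_measurable M"
  shows "level_coeff u \<in> borel_measurable borel"
  unfolding level_coeff_def by measurable

lemma level_coeff_bound:
  assumes u: "u \<in> L2 M"
  shows "cmod (level_coeff u l) \<le> (LINT x|M. cmod (u x))"
proof -
  have [measurable]: "u \<in> borel_measurable M" using u by (rule L2_measurable)
  have "integrable M (\<lambda>x. cmod (of_bool (l < p x) * u x))"
    using L2_norm_integrable[OF u]
    by (rule Bochner_Integration.integrable_bound) (auto simp: norm_mult)
  then have "(LINT x|M. cmod (of_bool (l < p x) * u x)) \<le> (LINT x|M. cmod (u x))"
    using L2_norm_integrable[OF u] by (intro integral_mono) (auto simp: norm_mult)
  then show ?thesis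
    unfolding level_coeff_def by (rule order_trans[OF integral_norm_bound])
qed

lemma p_L2: "(\<lambda>x. complex_of_real (p x)) \<in> L2 M"
  by (rule L2_of_real[OF p_measurable p_square_integrable])

lemma p_integrable: "integrable M p"
  using L2_norm_integrable[OF p_L2] p_nonneg by simp

lemma L2_times_p_integrable: "u \<in> L2 M \<Longrightarrow> integrable M (\<lambda>y. cmod (u y) * p y)"
  using L2_product_integrable[OF _ p_L2] p_nonneg by simp

text \<open>The layer-cake formula: the measures of the level sets, integrated over \<open>l \<ge> 0\<close>,
  give \<open>\<integral>p\<close>.\<close>

lemma level_measure_integrable:
  "integrable lborel (\<lambda>l. indicator {0..} l * measure M (level l))"
proof -
  interpret pair_sigma_finite M lborel ..
  define R where "R x l = (indicator {0..<p x} l :: real)" for x l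
  have "(\<lambda>(x, l). R x l) \<in> borel_measurable (M \<Otimes>\<^sub>M lborel)"
    unfolding R_def indicator_def atLeastLessThan_iff by measurable
  moreover have "(LINT l|lborel. norm (R x l)) = p x" for x
    using p_nonneg[of x] by (simp add: R_def integral_indicator_Ico)
  ultimately have "integrable lborel (\<lambda>l. LINT x|M. R x l)"
    using p_integrable by (intro Fubini_dominated(1)) (auto simp: R_def integrable_indicator_Ico)
  moreover have "(LINT x|M. R x l) = indicator {0..} l * measure M (level l)" for l
  proof -
    have "(\<lambda>x. R x l) = (\<lambda>x. indicator {0..} l * indicator {x. l < p x} x)"
      by (auto simp: R_def indicator_def)
    moreover have "{x. l < p x} \<inter> space M = level l" by (auto simp: level_def)
    ultimately show ?thesis by (simp add: Int_commute)
  qed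
  ultimately show ?thesis by simp
qed

text \<open>The layer-cake representation of the quantization: \<open>quant_pos M p u y\<close> is the
  integral of the level coefficients of \<open>u\<close> over the levels \<open>0 \<le> l < p y\<close>, because
  \<open>min (p x) (p y)\<close> is the length of \<open>{l \<ge> 0. l < p x \<and> l < p y}\<close>.\<close>

lemma quant_pos_layer:
  assumes u: "u \<in> L2 M"
  shows "quant_pos M p u y = (LINT l|lborel. indicator {0..<p y} l * level_coeff u l)"
proof -
  interpret pair_sigma_finite M lborel ..
  have [measurable]: "u \<in> borel_measurable M" using u by (rule L2_measurable)
  define K where "K x l = complex_of_real (indicator {0..<min (p x) (p y)} l) * u x" for x l
  have K_alt: "complex_of_real (indicator {0..<p y} l) * (of_bool (l < p x) * u x) = K x l" for x l
    by (auto simp: K_def indicator_def)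
  have "(\<lambda>(x, l). K x l) \<in> borel_measurable (M \<Otimes>\<^sub>M lborel)"
    unfolding K_def indicator_def atLeastLessThan_iff by measurable
  moreover have "(LINT l|lborel. norm (K x l)) = min (p x) (p y) * cmod (u x)" for x
    using p_nonneg[of x] p_nonneg[of y]
    by (simp add: K_def norm_mult integral_indicator_Ico)
  moreover have "min (p x) (p y) * cmod (u x) \<le> p y * cmod (u x)" for x
    by (intro mult_right_mono) auto
  ultimately have "(LINT l|lborel. LINT x|M. K x l) = (LINT x|M. LINT l|lborel. K x l)"
    using L2_norm_integrable[OF u]
    by (intro Fubini_dominated(2)[where H = "\<lambda>x. p y * cmod (u x)"])
      (auto simp: K_def integrable_indicator_Ico intro: order_trans)
  moreover have "(LINT l|lborel. K x l) = complex_of_real (min (p x) (p y)) * u x" for x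
    using p_nonneg[of x] p_nonneg[of y] by (simp add: K_def integral_indicator_Ico)
  moreover have "indicator {0..<p y} l * level_coeff u l = (LINT x|M. K x l)" for l
    unfolding level_coeff_def K_alt[symmetric] by (simp add: indicator_def)
  ultimately show ?thesis by (simp add: quant_pos_def)
qed

lemma cnj_level_coeff: "cnj (level_coeff w l) = (LINT y|M. of_bool (l < p y) * cnj (w y))"
proof -
  have "cnj (level_coeff w l) = (LINT y|M. cnj (of_bool (l < p y) * w y))"
    unfolding level_coeff_def by (simp only: Bochner_Integration.integral_cnj)
  also have "\<dots> = (LINT y|M. of_bool (l < p y) * cnj (w y))"
    by (rule Bochner_Integration.integral_cong) auto
  finally show ?thesis .
qed

lemma layer_inner:
  assumes u: "u \<in> L2 M" and w: "w \<in> L2 M"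
  defines "\<Phi> \<equiv> \<lambda>l. indicator {0..} l * (level_coeff u l * cnj (level_coeff w l))"
  shows "integrable lborel \<Phi>" and "(LINT l|lborel. \<Phi> l) = inner_L2 M w (quant_pos M p u)"
proof -
  interpret pair_sigma_finite M lborel ..
  have [measurable]: "u \<in> borel_measurable M" "w \<in> borel_measurable M"
    using u w by (simp_all add: L2_measurable)
  define E where "E = (LINT x|M. cmod (u x))"
  define G where "G y l = cnj (w y) * (indicator {0..<p y} l * level_coeff u l)" for y l
  have G_norm: "cmod (G y l) \<le> indicator {0..<p y} l * (cmod (w y) * E)" for y l
  proof -
    have "cmod (G y l) = indicator {0..<p y} l * (cmod (w y) * cmod (level_coeff u l))"
      by (simp add: G_def norm_mult indicator_def)
    also have "\<dots> \<le> indicator {0..<p y} l * (cmod (w y) * E)"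
      unfolding E_def by (intro mult_left_mono level_coeff_bound[OF u]) auto
    finally show ?thesis .
  qed
  have G_meas: "(\<lambda>(y, l). G y l) \<in> borel_measurable (M \<Otimes>\<^sub>M lborel)"
    unfolding G_def indicator_def atLeastLessThan_iff by measurable
  have G_slice: "integrable lborel (G y)" for y
  proof (rule Bochner_Integration.integrable_bound)
    show "integrable lborel (\<lambda>l. indicator {0..<p y} l * (cmod (w y) * E))"
      by (rule integrable_mult_left[OF integrable_indicator_Ico])
    show "G y \<in> borel_measurable lborel"
      unfolding G_def[abs_def] by measurable
    show "AE l in lborel. norm (G y l) \<le> norm (indicator {0..<p y} l * (cmod (w y) * E))"
      using G_norm by (intro AE_I2) (simp add: order_trans[OF _ abs_ge_self])
  qed
  have G_slice_norm: "(LINT l|lborel. cmod (G y l)) \<le> E * (cmod (w y) * p y)" for y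
  proof -
    have "(LINT l|lborel. cmod (G y l)) \<le> (LINT l|lborel. indicator {0..<p y} l * (cmod (w y) * E))"
      using G_slice G_norm integrable_mult_left[OF integrable_indicator_Ico]
      by (intro integral_mono) auto
    also have "\<dots> = E * (cmod (w y) * p y)"
      using p_nonneg[of y] by (simp add: integral_indicator_Ico)
    finally show ?thesis .
  qed
  have G_inner: "(LINT y|M. G y l) = \<Phi> l" for l
  proof -
    have "G y l = level_coeff u l * indicator {0..} l * (of_bool (l < p y) * cnj (w y))" for y
      using p_nonneg[of y] by (auto simp: G_def indicator_def)
    then have "(LINT y|M. G y l)
        = level_coeff u l * indicator {0..} l * (LINT y|M. of_bool (l < p y) * cnj (w y))"
      by (simp only: integral_mult_right_zero)
    then show ?thesis
      unfolding \<Phi>_def cnj_level_coeff by (simp only: ac_simps)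
  qed
  have G_outer: "(LINT l|lborel. G y l) = cnj (w y) * quant_pos M p u y" for y
    unfolding G_def quant_pos_layer[OF u] by simp
  note Fubini = Fubini_dominated[OF G_meas G_slice,
      OF integrable_mult_right[OF L2_times_p_integrable[OF w], of E] G_slice_norm]
  show "integrable lborel \<Phi>"
    using Fubini(1) by (simp add: G_inner)
  show "(LINT l|lborel. \<Phi> l) = inner_L2 M w (quant_pos M p u)"
    using Fubini(2) by (simp add: G_inner G_outer inner_L2_def)
qed

text \<open>The quantization of \<open>p\<close> maps L2 into L2, by the pointwise bound
  \<open>|quant_pos M p u y| \<le> (\<integral>|u|) \<cdot> p y\<close>.\<close>

lemma quant_pos_L2:
  assumes u: "u \<in> L2 M"
  shows "quant_pos M p u \<in> L2 M"
proof -
  have [measurable]: "u \<in> borel_measurable M" using u by (rule L2_measurable)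
  define E where "E = (LINT x|M. cmod (u x))"
  have meas: "quant_pos M p u \<in> borel_measurable M"
    unfolding quant_pos_def by measurable
  have bound: "cmod (quant_pos M p u y) \<le> E * p y" for y
  proof -
    have "integrable M (\<lambda>x. cmod (complex_of_real (min (p x) (p y)) * u x))"
      using integrable_mult_right[OF L2_norm_integrable[OF u], of "p y"]
      by (rule Bochner_Integration.integrable_bound) (auto simp: norm_mult p_nonneg mult_right_mono)
    then have "(LINT x|M. cmod (complex_of_real (min (p x) (p y)) * u x)) \<le> (LINT x|M. p y * cmod (u x))"
      using integrable_mult_right[OF L2_norm_integrable[OF u], of "p y"]
      by (intro integral_mono) (auto simp: norm_mult p_nonneg mult_right_mono)
    then show ?thesis
      unfolding quant_pos_def E_def by (simp add: mult.commute order_trans[OF integral_norm_bound])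
  qed
  have "integrable M (\<lambda>y. (cmod (quant_pos M p u y))\<^sup>2)"
  proof (rule Bochner_Integration.integrable_bound)
    show "integrable M (\<lambda>y. E\<^sup>2 * (p y)\<^sup>2)"
      by (rule integrable_mult_right[OF p_square_integrable])
    show "AE y in M. norm ((cmod (quant_pos M p u y))\<^sup>2) \<le> norm (E\<^sup>2 * (p y)\<^sup>2)"
      using bound by (intro AE_I2) (simp add: power_mult_distrib[symmetric] power_mono)
  qed (use meas in measurable)
  then show ?thesis using meas by (simp add: L2_def)
qed

text \<open>The level sets \<open>{p > r}\<close> increase to \<open>{p > l}\<close> as \<open>r\<close> decreases to \<open>l\<close>, so the
  level coefficients are continuous from the right (dominated convergence).  Hence they
  vanish identically once they vanish at all rational levels.\<close>

lemma level_coeff_continuous_from_above: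
  assumes u: "u \<in> L2 M" and r: "r \<longlonglongrightarrow> l" "\<And>n. l < r n"
  shows "(\<lambda>n. level_coeff u (r n)) \<longlonglongrightarrow> level_coeff u l"
  unfolding level_coeff_def
proof (rule integral_dominated_convergence[where w = "\<lambda>x. cmod (u x)"])
  have [measurable]: "u \<in> borel_measurable M" using u by (rule L2_measurable)
  show "(\<lambda>x. of_bool (l < p x) * u x) \<in> borel_measurable M"
    and "(\<lambda>x. of_bool (r n < p x) * u x) \<in> borel_measurable M" for n
    by measurable
  show "integrable M (\<lambda>x. cmod (u x))" using u by (rule L2_norm_integrable)
  show "AE x in M. norm (of_bool (r n < p x) * u x) \<le> cmod (u x)" for n
    by (simp add: norm_mult)
  show "AE x in M. (\<lambda>n. of_bool (r n < p x) * u x) \<longlonglongrightarrow> of_bool (l < p x) * u x"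
  proof (intro AE_I2)
    fix x
    show "(\<lambda>n. of_bool (r n < p x) * u x) \<longlonglongrightarrow> of_bool (l < p x) * u x"
    proof (cases "l < p x")
      case True
      then have "\<forall>\<^sub>F n in sequentially. r n < p x"
        using r(1) by (rule order_tendstoD(2)[rotated])
      then have "\<forall>\<^sub>F n in sequentially. of_bool (r n < p x) * u x = of_bool (l < p x) * u x"
        by eventually_elim (simp add: True)
      then show ?thesis by (rule tendsto_eventually)
    next
      case False
      then have "\<not> r n < p x" for n using r(2)[of n] by linarith
      then show ?thesis using False by simp
    qed
  qed
qed

lemma level_coeff_eq_0:
  assumes u: "u \<in> L2 M" and rat: "\<And>q. q \<in> \<rat> \<Longrightarrow> level_coeff u q = 0"
  shows "level_coeff u l = 0"
proof -
  have "\<exists>r\<in>\<rat>. l < r \<and> r < l + 1 / Suc n" for n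
    by (intro Rats_dense_in_real) simp
  then obtain r where r: "\<And>n. r n \<in> \<rat>" "\<And>n. l < r n" "\<And>n. r n < l + 1 / Suc n"
    by metis
  have "r \<longlonglongrightarrow> l"
  proof (rule tendsto_sandwich[of "\<lambda>_. l" _ _ "\<lambda>n. l + 1 / Suc n"])
    show "(\<lambda>n. l + 1 / real (Suc n)) \<longlonglongrightarrow> l"
      using tendsto_add[OF tendsto_const[of l] LIMSEQ_inverse_real_of_nat]
      by (simp add: inverse_eq_divide)
    show "\<forall>\<^sub>F n in sequentially. l \<le> r n"
      using r(2) by (intro always_eventually allI less_imp_le)
    show "\<forall>\<^sub>F n in sequentially. r n \<le> l + 1 / Suc n"
      using r(3) by (intro always_eventually allI less_imp_le)
  qed simp
  then have "(\<lambda>n. level_coeff u (r n)) \<longlonglongrightarrow> level_coeff u l"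
    using level_coeff_continuous_from_above[of u r l] u r(2) by blast
  then show ?thesis
    using rat[OF r(1)] by (simp add: LIMSEQ_const_iff)
qed

end

locale level_quantization = nonneg_L2_variable M p + positive_operator M \<rho>
  for M :: "'a measure" and p \<rho>
begin

text \<open>The diagonal matrix coefficients of \<open>\<rho> \<circ> mu_op M (level l)\<close> factor through the
  level coefficients, because \<open>mu_op M A u = \<langle>\<chi>\<^sub>A, u\<rangle> \<chi>\<^sub>A\<close> and \<open>\<rho>\<close> is symmetric.\<close>

lemma diagonal_level:
  assumes e: "e \<in> L2 M"
  shows "inner_L2 M e (\<rho> (mu_op M (level l) e)) = level_coeff e l * cnj (level_coeff (\<rho> e) l)"
proof -
  have "inner_L2 M e (\<rho> (mu_op M (level l) e)) = level_coeff e l * inner_L2 M e (\<rho> (indicator (level l)))"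
    unfolding mu_op_level by (rule inner_op_scale[OF e level_L2])
  also have "inner_L2 M e (\<rho> (indicator (level l))) = cnj (level_coeff (\<rho> e) l)"
    unfolding op_symmetric[OF e level_L2] level_coeff_inner inner_L2_cnj ..
  finally show ?thesis .
qed

text \<open>Domination of the diagonal coefficients: by \<open>|a b| \<le> (a\<^sup>2 + b\<^sup>2) / 2\<close> and Bessel's
  inequality for \<open>\<chi> = \<chi>\<^bsub>level l\<^esub>\<close> and \<open>\<rho> \<chi>\<close>, their absolute sum over any finite
  orthonormal family is at most \<open>(\<parallel>\<chi>\<parallel>\<^sup>2 + \<parallel>\<rho> \<chi>\<parallel>\<^sup>2) / 2\<close>.\<close>

lemma diagonal_level_norm:
  assumes e: "e \<in> L2 M"
  shows "cmod (level_coeff e l * cnj (level_coeff (\<rho> e) l))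
    \<le> ((cmod (inner_L2 M e (indicator (level l))))\<^sup>2
        + (cmod (inner_L2 M e (\<rho> (indicator (level l)))))\<^sup>2) / 2"
proof -
  have "cmod (level_coeff e l) = cmod (inner_L2 M e (indicator (level l)))"
    unfolding level_coeff_inner inner_L2_cnj[of M e, symmetric] complex_mod_cnj ..
  moreover have "cmod (level_coeff (\<rho> e) l) = cmod (inner_L2 M e (\<rho> (indicator (level l))))"
    unfolding level_coeff_inner op_symmetric[OF level_L2 e]
      inner_L2_cnj[of M e, symmetric] complex_mod_cnj ..
  ultimately show ?thesis
    using sum_squares_bound[of "cmod (inner_L2 M e (indicator (level l)))"
        "cmod (inner_L2 M e (\<rho> (indicator (level l))))"]
    by (simp add: norm_mult)
qed

lemma diagonal_level_sum_bound:
  assumes orth: "orthonormal M F" and F: "finite F"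
  shows "(\<Sum>e\<in>F. cmod (level_coeff e l * cnj (level_coeff (\<rho> e) l)))
    \<le> ((LINT x|M. (cmod (indicator (level l) x :: complex))\<^sup>2)
        + (LINT x|M. (cmod (\<rho> (indicator (level l)) x))\<^sup>2)) / 2"
proof -
  have "(\<Sum>e\<in>F. cmod (level_coeff e l * cnj (level_coeff (\<rho> e) l)))
      \<le> (\<Sum>e\<in>F. ((cmod (inner_L2 M e (indicator (level l))))\<^sup>2
          + (cmod (inner_L2 M e (\<rho> (indicator (level l)))))\<^sup>2) / 2)"
    by (intro sum_mono diagonal_level_norm orthonormal_L2[OF orth])
  also have "\<dots> = ((\<Sum>e\<in>F. (cmod (inner_L2 M e (indicator (level l))))\<^sup>2)
      + (\<Sum>e\<in>F. (cmod (inner_L2 M e (\<rho> (indicator (level l)))))\<^sup>2)) / 2"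
    by (simp only: sum_divide_distrib[symmetric] sum.distrib)
  also have "\<dots> \<le> ((LINT x|M. (cmod (indicator (level l) x :: complex))\<^sup>2)
      + (LINT x|M. (cmod (\<rho> (indicator (level l)) x))\<^sup>2)) / 2"
    using bessel_finite[OF orth F level_L2, of l] bessel_finite[OF orth F op_L2[OF level_L2], of l]
    by (intro divide_right_mono add_mono) simp_all
  finally show ?thesis .
qed

text \<open>Only countably many basis vectors have a nonzero level coefficient at some level:
  at rational levels this is Bessel's inequality, and the rational levels determine all
  levels by right continuity.\<close>

lemma level_coeff_countable_support:
  assumes B: "orthonormal M B"
  shows "countable {e\<in>B. \<exists>q\<in>\<rat>. level_coeff e q \<noteq> 0}"
proof (rule countable_subset)
  show "{e\<in>B. \<exists>q\<in>\<rat>. level_coeff e q \<noteq> 0}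
      \<subseteq> (\<Union>q\<in>\<rat>. {e\<in>B. inner_L2 M e (indicator (level q)) \<noteq> 0})"
  proof (intro subsetI)
    fix e assume "e \<in> {e\<in>B. \<exists>q\<in>\<rat>. level_coeff e q \<noteq> 0}"
    then obtain q where "e \<in> B" "q \<in> \<rat>" "level_coeff e q \<noteq> 0" by blast
    moreover have "level_coeff e q = cnj (inner_L2 M e (indicator (level q)))"
      unfolding level_coeff_inner inner_L2_cnj ..
    ultimately show "e \<in> (\<Union>q\<in>\<rat>. {e\<in>B. inner_L2 M e (indicator (level q)) \<noteq> 0})"
      by auto
  qed
  show "countable (\<Union>q\<in>\<rat>. {e\<in>B. inner_L2 M e (indicator (level q)) \<noteq> 0})"
    by (intro countable_UN countable_rat bessel_countable[OF B level_L2])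
qed

text \<open>Its integral is the diagonal coefficient of
  \<open>\<rho> \<circ> quant_pos M p\<close>, and its sum over the basis is \<open>mu_rho M \<rho> (level l)\<close>.\<close>

definition layer_diag :: "('a \<Rightarrow> complex) \<Rightarrow> real \<Rightarrow> complex" where
  "layer_diag e l = indicator {0..} l * (level_coeff e l * cnj (level_coeff (\<rho> e) l))"

lemma layer_diag_integral:
  assumes e: "e \<in> L2 M"
  shows "integrable lborel (layer_diag e)"
    and "(LINT l|lborel. layer_diag e l) = inner_L2 M e (\<rho> (quant_pos M p e))"
  using layer_inner[OF e op_L2[OF e]] op_symmetric[OF e quant_pos_L2[OF e]]
  by (simp_all add: layer_diag_def[abs_def])

lemma layer_diag_infsum:
  "(\<Sum>\<^sub>\<infinity>e\<in>some_onb M. layer_diag e l) = indicator {0..} l * mu_rho M \<rho> (level l)"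
proof -
  have "mu_rho M \<rho> (level l)
      = (\<Sum>\<^sub>\<infinity>e\<in>some_onb M. level_coeff e l * cnj (level_coeff (\<rho> e) l))"
    unfolding mu_rho_def tr_def some_onb_def[symmetric]
    by (rule infsum_cong) (simp add: diagonal_level orthonormal_L2[OF orthonormal_some_onb])
  then show ?thesis by (simp add: layer_diag_def infsum_cmult_right')
qed

text \<open>Uniform domination by an integrable function of \<open>l\<close>, obtained from
  \<open>diagonal_level_sum_bound\<close>, the operator bound for \<open>\<rho>\<close> and the layer-cake formula.\<close>

lemma layer_diag_dominated:
  obtains G where "integrable lborel G"
    and "\<And>B F l. orthonormal M B \<Longrightarrow> finite F \<Longrightarrow> F \<subseteq> B \<Longrightarrow> (\<Sum>e\<in>F. norm (layer_diag e l)) \<le> G l"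
proof -
  obtain C where C: "\<And>u. u \<in> L2 M \<Longrightarrow> (LINT x|M. (cmod (\<rho> u x))\<^sup>2) \<le> C * (LINT x|M. (cmod (u x))\<^sup>2)"
    using op_norm_bound by blast
  define G where "G l = indicator {0..} l * ((1 + C) / 2 * measure M (level l))" for l
  have "integrable lborel G"
    using integrable_mult_right[OF level_measure_integrable, of "(1 + C) / 2"]
    by (simp add: G_def[abs_def] ac_simps)
  moreover have "(\<Sum>e\<in>F. norm (layer_diag e l)) \<le> G l"
    if B: "orthonormal M B" and F: "finite F" "F \<subseteq> B" for B F l
  proof -
    have "(\<Sum>e\<in>F. cmod (level_coeff e l * cnj (level_coeff (\<rho> e) l)))
        \<le> (1 + C) / 2 * measure M (level l)"
      using diagonal_level_sum_bound[OF orthonormal_subset[OF B F(2)] F(1), of l] C[OF level_L2, of l]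
      by (simp add: level_norm_square field_simps)
    then show ?thesis
      by (simp add: G_def layer_diag_def norm_mult indicator_def sum_nonneg)
  qed
  ultimately show ?thesis using that by blast
qed

text \<open>This is \<open>has_sum_integral_interchange\<close> applied to \<open>layer_diag\<close>; the
  countable support comes from \<open>level_coeff_countable_support\<close> and \<open>level_coeff_eq_0\<close>.\<close>

lemma trace_quant_pos_has_sum:
  "((\<lambda>e. inner_L2 M e (\<rho> (quant_pos M p e))) has_sum
     (LINT l:{0..}|lborel. mu_rho M \<rho> (level l))) (some_onb M)"
proof -
  define B where "B = some_onb M"
  have B: "orthonormal M B" unfolding B_def by (rule orthonormal_some_onb)
  have B_L2: "e \<in> B \<Longrightarrow> e \<in> L2 M" for e using B by (rule orthonormal_L2)
  define S where "S = {e\<in>B. \<exists>q\<in>\<rat>. level_coeff e q \<noteq> 0}"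
  obtain G where G: "integrable lborel G"
    "\<And>F l. finite F \<Longrightarrow> F \<subseteq> B \<Longrightarrow> (\<Sum>e\<in>F. norm (layer_diag e l)) \<le> G l"
    using layer_diag_dominated B by metis
  have "((\<lambda>e. LINT l|lborel. layer_diag e l) has_sum (LINT l|lborel. (\<Sum>\<^sub>\<infinity>e\<in>B. layer_diag e l))) B"
  proof (rule has_sum_integral_interchange[where S = S and G = G])
    show "countable S" unfolding S_def using B by (rule level_coeff_countable_support)
    show "layer_diag e l = 0" if "e \<in> B - S" for e l
      using that level_coeff_eq_0[OF B_L2] by (auto simp: S_def layer_diag_def)
  qed (use G B_L2 layer_diag_integral(1) in \<open>auto simp: S_def sigma_finite_lborel
      intro: borel_measurable_integrable\<close>)
  moreover have "(LINT l|lborel. (\<Sum>\<^sub>\<infinity>e\<in>B. layer_diag e l))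
      = (LINT l:{0..}|lborel. mu_rho M \<rho> (level l))"
    unfolding B_def layer_diag_infsum set_lebesgue_integral_def scaleR_conv_of_real
    by (rule Bochner_Integration.integral_cong) (auto simp: indicator_def)
  ultimately show ?thesis
    using has_sum_cong[of B "\<lambda>e. LINT l|lborel. layer_diag e l"] layer_diag_integral(2)[OF B_L2]
    unfolding B_def by simp
qed

end

lemma (in finite_measure) nonneg_L2_variable_positive_part:
  assumes [measurable]: "g \<in> borel_measurable M" and g: "integrable M (\<lambda>x. (g x)\<^sup>2)"
  shows "nonneg_L2_variable M (\<lambda>x. max (g x) 0)"
proof
  show "integrable M (\<lambda>x. (max (g x) 0)\<^sup>2)"
    by (rule Bochner_Integration.integrable_bound[OF g])
      (auto simp: max_def abs_le_square_iff intro!: AE_I2)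
qed simp_all

text \<open>The statement for a general square-integrable \<open>f\<close>, in terms of the basis sum:
  split \<open>quant M f\<close> into the quantizations of the positive and the negative part, apply
  \<open>trace_quant_pos_has_sum\<close> to both, and identify their level sets for \<open>l \<ge> 0\<close>.\<close>

lemma (in finite_measure) trace_quant_has_sum:
  assumes op: "positive_operator M \<rho>"
    and f: "f \<in> borel_measurable M" "integrable M (\<lambda>x. (f x)\<^sup>2)"
  shows "((\<lambda>e. inner_L2 M e (\<rho> (quant M f e))) has_sum
      ((LINT l:{0..}|lborel. mu_rho M \<rho> {x\<in>space M. f x > l})
       - (LINT l:{0..}|lborel. mu_rho M \<rho> {x\<in>space M. f x < - l}))) (some_onb M)"
proof -
  have neg_part: "(\<lambda>x. - min (f x) 0) = (\<lambda>x. max (- f x) 0)" by auto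
  interpret pos: level_quantization M "\<lambda>x. max (f x) 0" \<rho>
    using nonneg_L2_variable_positive_part[OF f] op by (rule level_quantization.intro)
  interpret neg: level_quantization M "\<lambda>x. - min (f x) 0" \<rho>
    using nonneg_L2_variable_positive_part[of "\<lambda>x. - f x"] f op
    unfolding neg_part by (intro level_quantization.intro) simp_all
  have pos_levels: "(LINT l:{0..}|lborel. mu_rho M \<rho> (pos.level l))
      = (LINT l:{0..}|lborel. mu_rho M \<rho> {x\<in>space M. f x > l})"
    by (rule set_lebesgue_integral_cong)
      (auto simp: pos.level_def intro!: arg_cong[where f = "mu_rho M \<rho>"])
  have neg_levels: "(LINT l:{0..}|lborel. mu_rho M \<rho> (neg.level l))
      = (LINT l:{0..}|lborel. mu_rho M \<rho> {x\<in>space M. f x < - l})"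
    by (rule set_lebesgue_integral_cong)
      (auto simp: neg.level_def intro!: arg_cong[where f = "mu_rho M \<rho>"])
  have quant_split: "inner_L2 M e (\<rho> (quant M f e)) =
      inner_L2 M e (\<rho> (quant_pos M (\<lambda>x. max (f x) 0) e))
      + - inner_L2 M e (\<rho> (quant_pos M (\<lambda>x. - min (f x) 0) e))"
    if "e \<in> some_onb M" for e
    using orthonormal_L2[OF orthonormal_some_onb that] unfolding quant_def
    by (simp add: pos.inner_op_diff pos.quant_pos_L2 neg.quant_pos_L2)
  have "((\<lambda>e. - inner_L2 M e (\<rho> (quant_pos M (\<lambda>x. - min (f x) 0) e))) has_sum
      - (LINT l:{0..}|lborel. mu_rho M \<rho> (neg.level l))) (some_onb M)"
    using neg.trace_quant_pos_has_sum by (simp add: has_sum_uminus)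
  from has_sum_add[OF pos.trace_quant_pos_has_sum this]
  have "((\<lambda>e. inner_L2 M e (\<rho> (quant M f e))) has_sum
      ((LINT l:{0..}|lborel. mu_rho M \<rho> (pos.level l))
       + - (LINT l:{0..}|lborel. mu_rho M \<rho> (neg.level l)))) (some_onb M)"
    by (subst has_sum_cong[OF quant_split])
  then show ?thesis
    unfolding pos_levels neg_levels diff_conv_add_uminus .
qed

theorem mainTheorem14:
  fixes M :: "'a measure"
    and \<rho> :: "('a \<Rightarrow> complex) \<Rightarrow> ('a \<Rightarrow> complex)"
    and f :: "'a \<Rightarrow> real"
  assumes "prob_space M"
    and "density_op M \<rho>"
    and "f \<in> borel_measurable M"
    and "integrable M (\<lambda>x. (f x)\<^sup>2)"
  shows "q_integral M \<rho> f =
           (LINT l:{0..}|lborel. mu_rho M \<rho> {x\<in>space M. f x > l})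
         - (LINT l:{0..}|lborel. mu_rho M \<rho> {x\<in>space M. f x < - l})"
proof -
  interpret finite_measure M
    using assms(1) by (rule prob_space.finite_measure)
  have "positive_operator M \<rho>"
    using assms(2) by (rule density_op_positive_operator)
  from trace_quant_has_sum[OF this assms(3,4)] show ?thesis
    unfolding q_integral_def tr_def some_onb_def[symmetric] by (rule infsumI)
qed

end
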